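(* Let $\alpha\in(0,1]$. Let $G$ be an $r$-regular graph on $n$ vertices that is determined by its $A_\alpha$-spectrum, let $m\ge1$, and let $H$ be a graph that is $A_\alpha$-cospectral with $G\vee K_m$. If $H$ has (at least) $m$ vertices of degree $n+m-1$, then $H\cong G\vee K_m$.
   Context: All graphs are finite, simple and undirected. For a graph $G$, $A(G)$ is its adjacency matrix, $D(G)$ its diagonal degree matrix, and $A_\alpha(G)=\alpha D(G)+(1-\alpha)A(G)$. Two graphs are $A_\alpha$-cospectral if $A_\alpha$ of each has the same multiset of eigenvalues; a graph is determined by its $A_\alpha$-spectrum if every graph $A_\alpha$-cospectral with it is isomorphic to it. $K_m$ is the complete graph on $m$ vertices and $G\vee H$ is the join (disjoint union plus all edges between the two vertex sets). *)

theory Defs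
  imports "Jordan_Normal_Form.Char_Poly"
begin

definition is_graph :: "nat \<Rightarrow> (nat \<Rightarrow> nat \<Rightarrow> bool) \<Rightarrow> bool" where
  "is_graph n E \<longleftrightarrow> (\<forall>i j. E i j \<longrightarrow> i < n \<and> j < n) \<and> (\<forall>i j. E i j \<longrightarrow> E j i) \<and> (\<forall>i. \<not> E i i)"

definition degree :: "nat \<Rightarrow> (nat \<Rightarrow> nat \<Rightarrow> bool) \<Rightarrow> nat \<Rightarrow> nat" where
  "degree n E i = card {j. j < n \<and> E i j}"

definition regular :: "nat \<Rightarrow> (nat \<Rightarrow> nat \<Rightarrow> bool) \<Rightarrow> nat \<Rightarrow> bool" where
  "regular n E r \<longleftrightarrow> (\<forall>i<n. degree n E i = r)"

definition adj_mat :: "nat \<Rightarrow> (nat \<Rightarrow> nat \<Rightarrow> bool) \<Rightarrow> real mat" where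
  "adj_mat n E = mat n n (\<lambda>(i,j). if E i j then 1 else 0)"

definition deg_mat :: "nat \<Rightarrow> (nat \<Rightarrow> nat \<Rightarrow> bool) \<Rightarrow> real mat" where
  "deg_mat n E = mat n n (\<lambda>(i,j). if i = j then real (degree n E i) else 0)"

definition A_alpha :: "real \<Rightarrow> nat \<Rightarrow> (nat \<Rightarrow> nat \<Rightarrow> bool) \<Rightarrow> real mat" where
  "A_alpha \<alpha> n E = \<alpha> \<cdot>\<^sub>m deg_mat n E + (1 - \<alpha>) \<cdot>\<^sub>m adj_mat n E"

text \<open>Multiset of eigenvalues of a square real matrix: each eigenvalue counted
with its algebraic multiplicity (its multiplicity as a root of the characteristic
polynomial). For real symmetric matrices all eigenvalues are real.\<close>
definition eig_mult :: "real mat \<Rightarrow> real \<Rightarrow> nat" where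
  "eig_mult A x = order x (char_poly A)"

definition A_alpha_cospectral ::
  "real \<Rightarrow> nat \<Rightarrow> (nat \<Rightarrow> nat \<Rightarrow> bool) \<Rightarrow> nat \<Rightarrow> (nat \<Rightarrow> nat \<Rightarrow> bool) \<Rightarrow> bool" where
  "A_alpha_cospectral \<alpha> n E n' E' \<longleftrightarrow> n = n' \<and>
     (\<forall>x. eig_mult (A_alpha \<alpha> n E) x = eig_mult (A_alpha \<alpha> n' E') x)"

definition graph_iso ::
  "nat \<Rightarrow> (nat \<Rightarrow> nat \<Rightarrow> bool) \<Rightarrow> nat \<Rightarrow> (nat \<Rightarrow> nat \<Rightarrow> bool) \<Rightarrow> bool" where
  "graph_iso n E n' E' \<longleftrightarrow> (\<exists>f. bij_betw f {..<n} {..<n'} \<and>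
     (\<forall>i<n. \<forall>j<n. E i j \<longleftrightarrow> E' (f i) (f j)))"

definition DAS :: "real \<Rightarrow> nat \<Rightarrow> (nat \<Rightarrow> nat \<Rightarrow> bool) \<Rightarrow> bool" where
  "DAS \<alpha> n E \<longleftrightarrow> (\<forall>n' E'. is_graph n' E' \<and> A_alpha_cospectral \<alpha> n' E' n E \<longrightarrow> graph_iso n' E' n E)"

text \<open>Join G \<or> K_m: vertices 0..<n carry G, vertices n..<n+m carry K_m,
all edges between the two parts.\<close>
definition join_complete :: "nat \<Rightarrow> (nat \<Rightarrow> nat \<Rightarrow> bool) \<Rightarrow> nat \<Rightarrow> nat \<Rightarrow> nat \<Rightarrow> bool" where
  "join_complete n E m i j \<longleftrightarrow> i < n + m \<and> j < n + m \<and> i \<noteq> j \<and>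
     (if i < n \<and> j < n then E i j else True)"

end

theory Submission
  imports Defs "Jordan_Normal_Form.Schur_Decomposition"
begin

text \<open>Since A_alpha is symmetric, cospectral graphs have the same characteristic polynomial, hence
  the same traces of A_alpha and of its square; for alpha > 0 these are the sums of the degrees and of
  the squared degrees.  The m dominating vertices of H exhibit H as a join G' \<or> K_m, and
  comparing degree moments with G \<or> K_m shows that the degrees of G' have the mean and the variance
  of an r-regular graph, so G' is r-regular.  For r-regular G' the split of G' \<or> K_m into G' and
  K_m is an equitable partition, which factors the characteristic polynomial of the join into a
  factor depending only on n, m, r and the characteristic polynomial of G' shifted by alpha m.
  Hence G' is A_alpha-cospectral with G, so G' is isomorphic to G and H to G \<or> K_m.\<close>

section \<open>Spectra of real symmetric matrices\<close>

lemma symmetric_eigenvalue_real: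
  fixes A :: "real mat"
  assumes A: "A \<in> carrier_mat n n"
    and sym: "\<And>i j. i < n \<Longrightarrow> j < n \<Longrightarrow> A $$ (i,j) = A $$ (j,i)"
    and ev: "eigenvalue (map_mat complex_of_real A) c"
  shows "c \<in> \<real>"
proof -
  let ?A = "map_mat complex_of_real A"
  obtain v where v: "v \<in> carrier_vec n" "v \<noteq> 0\<^sub>v n" and Av: "?A *\<^sub>v v = c \<cdot>\<^sub>v v"
    using ev A unfolding eigenvalue_def eigenvector_def by auto
  define w where "w = (\<Sum>i<n. cnj (v$i) * v$i)"
  define S where "S = (\<Sum>i<n. cnj (v$i) * (?A *\<^sub>v v)$i)"
  have S_eigen: "S = c * w"
    unfolding S_def w_def Av using v by (simp add: sum_distrib_left algebra_simps)
  have S_form: "S = (\<Sum>i<n. \<Sum>j<n. complex_of_real (A$$(i,j)) * cnj (v$i) * v$j)"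
    unfolding S_def using A v
    by (simp add: mult_mat_vec_def scalar_prod_def sum_distrib_left algebra_simps lessThan_atLeast0)
  have "cnj S = (\<Sum>i<n. \<Sum>j<n. complex_of_real (A$$(i,j)) * v$i * cnj (v$j))"
    unfolding S_form by (simp add: cnj_sum)
  also have "\<dots> = (\<Sum>j<n. \<Sum>i<n. complex_of_real (A$$(i,j)) * v$i * cnj (v$j))"
    by (rule sum.swap)
  also have "\<dots> = S"
    unfolding S_form by (intro sum.cong refl) (simp add: sym algebra_simps)
  finally have S_real: "cnj S = S" .
  have w_norm: "w = complex_of_real (\<Sum>i<n. (cmod (v$i))\<^sup>2)"
    unfolding w_def of_real_sum by (intro sum.cong refl) (metis complex_norm_square mult.commute)
  obtain i where i: "i < n" "v$i \<noteq> 0"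
    using v by (metis eq_vecI carrier_vecD index_zero_vec(1,2))
  have "(cmod (v$i))\<^sup>2 \<le> (\<Sum>i<n. (cmod (v$i))\<^sup>2)"
    by (rule member_le_sum) (use i in auto)
  moreover have "(cmod (v$i))\<^sup>2 > 0" using i by simp
  ultimately have "w \<noteq> 0" unfolding w_norm by (metis of_real_eq_0_iff not_less order_refl)
  moreover have "cnj c * w = c * w" using S_real unfolding S_eigen w_norm by simp
  ultimately show ?thesis by (simp add: Reals_cnj_iff)
qed

lemma symmetric_char_poly_splits:
  fixes A :: "real mat"
  assumes A: "A \<in> carrier_mat n n"
    and sym: "\<And>i j. i < n \<Longrightarrow> j < n \<Longrightarrow> A $$ (i,j) = A $$ (j,i)"
  obtains es where "char_poly A = (\<Prod>e\<leftarrow>es. [:-e, 1:])"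
proof -
  let ?A = "map_mat complex_of_real A"
  interpret of_real_poly: map_poly_inj_comm_ring_hom complex_of_real ..
  have cA: "?A \<in> carrier_mat n n" using A by simp
  obtain as where cp: "char_poly ?A = (\<Prod>a\<leftarrow>as. [:-a, 1:])"
    using char_poly_factorized[OF cA] by blast
  have real_roots: "a \<in> \<real>" if "a \<in> set as" for a
  proof (rule symmetric_eigenvalue_real[OF A sym])
    have "poly (char_poly ?A) a = 0"
      unfolding cp using that by (simp add: poly_prod_list prod_list_zero_iff)
    thus "eigenvalue ?A a" using eigenvalue_root_char_poly[OF cA] by simp
  qed auto
  have "map_poly complex_of_real (\<Prod>e\<leftarrow>map Re as. [:-e, 1:]) = (\<Prod>a\<leftarrow>as. [:-a, 1:])"
    using real_roots
  proof (induction as)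
    case (Cons a as)
    have "map_poly complex_of_real [:-Re a, 1:] = [:-a, 1:]"
      using Cons.prems[of a] by (simp add: of_real_hom.hom_uminus of_real_Re)
    moreover have "map_poly complex_of_real (\<Prod>e\<leftarrow>map Re (a # as). [:-e, 1:])
        = map_poly complex_of_real [:-Re a, 1:] * map_poly complex_of_real (\<Prod>e\<leftarrow>map Re as. [:-e, 1:])"
      by (simp only: list.map prod_list.Cons of_real_poly.hom_mult)
    ultimately show ?case using Cons by simp
  qed simp
  also have "\<dots> = map_poly complex_of_real (char_poly A)"
    by (simp only: cp[symmetric] of_real_hom.char_poly_hom[OF A])
  finally have "char_poly A = (\<Prod>e\<leftarrow>map Re as. [:-e, 1:])"
    by (rule of_real_poly.injectivity[symmetric])
  thus thesis by (rule that)
qed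

lemma order_prod_linear_factors:
  "Polynomial.order x (\<Prod>e\<leftarrow>es. [:-e, 1::'a::idom:]) = count (mset es) x"
proof (induction es)
  case Nil
  then show ?case by (simp add: order_0I)
next
  case (Cons a es)
  have nonzero: "(\<Prod>e\<leftarrow>es. [:-e, 1::'a:]) \<noteq> 0" by (auto simp: prod_list_zero_iff)
  have "Polynomial.order x ([:-a, 1:] * (\<Prod>e\<leftarrow>es. [:-e, 1::'a:]))
      = Polynomial.order x [:-a, 1:] + Polynomial.order x (\<Prod>e\<leftarrow>es. [:-e, 1:])"
    by (rule order_mult) (metis nonzero mult_eq_0_iff pCons_eq_0_iff one_neq_zero)
  moreover have "Polynomial.order x [:-a, 1::'a:] = (if x = a then 1 else 0)"
    using order_power_n_n[of a 1] by (auto intro!: order_0I)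
  ultimately show ?case using Cons by simp
qed

lemma symmetric_char_poly_eqI:
  fixes A B :: "real mat"
  assumes A: "A \<in> carrier_mat n n" and symA: "\<And>i j. i < n \<Longrightarrow> j < n \<Longrightarrow> A $$ (i,j) = A $$ (j,i)"
    and B: "B \<in> carrier_mat n n" and symB: "\<And>i j. i < n \<Longrightarrow> j < n \<Longrightarrow> B $$ (i,j) = B $$ (j,i)"
    and order_eq: "\<And>x. Polynomial.order x (char_poly A) = Polynomial.order x (char_poly B)"
  shows "char_poly A = char_poly B"
proof -
  obtain es where es: "char_poly A = (\<Prod>e\<leftarrow>es. [:-e, 1:])" using symmetric_char_poly_splits[OF A symA] .
  obtain fs where fs: "char_poly B = (\<Prod>e\<leftarrow>fs. [:-e, 1:])" using symmetric_char_poly_splits[OF B symB] .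
  have "mset es = mset fs"
    by (rule multiset_eqI) (use order_eq in \<open>simp add: es fs order_prod_linear_factors\<close>)
  hence "mset (map (\<lambda>e. [:-e, 1:]) es) = mset (map (\<lambda>e. [:-e, 1::real:]) fs)" by simp
  thus ?thesis unfolding es fs by (metis prod_mset_prod_list)
qed

definition mat_trace :: "'a :: semiring_0 mat \<Rightarrow> 'a" where
  "mat_trace A = (\<Sum>i<dim_row A. A $$ (i,i))"

lemma mat_trace_mult_comm:
  fixes X Y :: "'a :: comm_semiring_0 mat"
  assumes X: "X \<in> carrier_mat n n" and Y: "Y \<in> carrier_mat n n"
  shows "mat_trace (X * Y) = mat_trace (Y * X)"
proof -
  have "mat_trace (X * Y) = (\<Sum>i<n. \<Sum>k<n. X $$ (i,k) * Y $$ (k,i))"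
    using X Y by (simp add: mat_trace_def scalar_prod_def lessThan_atLeast0)
  also have "\<dots> = (\<Sum>k<n. \<Sum>i<n. Y $$ (k,i) * X $$ (i,k))"
    by (subst sum.swap) (simp add: mult.commute)
  also have "\<dots> = mat_trace (Y * X)"
    using X Y by (simp add: mat_trace_def scalar_prod_def lessThan_atLeast0)
  finally show ?thesis .
qed

lemma mat_trace_similar:
  fixes A B :: "'a :: comm_ring_1 mat"
  assumes "similar_mat_wit A B P Q"
  shows "mat_trace A = mat_trace B"
proof -
  define n where "n = dim_row A"
  from similar_mat_witD[OF n_def assms] have P: "P \<in> carrier_mat n n" and B: "B \<in> carrier_mat n n"
    and Q: "Q \<in> carrier_mat n n" and QP: "Q * P = 1\<^sub>m n" and AB: "A = P * B * Q" by auto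
  have "mat_trace A = mat_trace (P * (B * Q))" unfolding AB using P B Q by (simp add: assoc_mult_mat)
  also have "\<dots> = mat_trace ((B * Q) * P)" by (rule mat_trace_mult_comm) (use P B Q in auto)
  also have "(B * Q) * P = B" using B Q P QP by (simp add: assoc_mult_mat)
  finally show ?thesis .
qed

lemma upper_triangular_mult_diag:
  fixes B :: "'a :: comm_semiring_1 mat"
  assumes B: "B \<in> carrier_mat n n" and ut: "upper_triangular B" and i: "i < n"
  shows "(B * B) $$ (i,i) = (B $$ (i,i))\<^sup>2"
proof -
  have "(B * B) $$ (i,i) = (\<Sum>k<n. B $$ (i,k) * B $$ (k,i))"
    using B i by (simp add: scalar_prod_def lessThan_atLeast0)
  also have "\<dots> = (\<Sum>k\<in>{i}. B $$ (i,k) * B $$ (k,i))"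
  proof (rule sum.mono_neutral_right)
    show "\<forall>k\<in>{..<n} - {i}. B $$ (i,k) * B $$ (k,i) = 0"
    proof
      fix k assume "k \<in> {..<n} - {i}"
      hence "k < i \<or> i < k" "k < n" by auto
      thus "B $$ (i,k) * B $$ (k,i) = 0" using ut B i unfolding upper_triangular_def by auto
    qed
  qed (use i in auto)
  finally show ?thesis by (simp add: power2_eq_square)
qed

lemma mat_trace_split_char_poly:
  fixes A :: "'a :: conjugatable_ordered_field mat"
  assumes A: "A \<in> carrier_mat n n" and cp: "char_poly A = (\<Prod>e\<leftarrow>es. [:-e, 1:])"
  shows "mat_trace A = sum_list es" and "mat_trace (A * A) = (\<Sum>e\<leftarrow>es. e\<^sup>2)"
proof -
  obtain B P Q where "schur_decomposition A es = (B, P, Q)" by (cases "schur_decomposition A es") auto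
  from schur_decomposition[OF A cp this] have sim: "similar_mat_wit A B P Q"
    and ut: "upper_triangular B" and diag: "diag_mat B = es" by auto
  have B: "B \<in> carrier_mat n n" using similar_mat_witD2[OF A sim] by auto
  have es: "es = map (\<lambda>i. B $$ (i,i)) [0..<n]" using diag B by (simp add: diag_mat_def)
  have "mat_trace A = mat_trace B" by (rule mat_trace_similar[OF sim])
  thus "mat_trace A = sum_list es"
    unfolding es using B by (simp add: mat_trace_def sum_list_sum_nth lessThan_atLeast0)
  have "similar_mat_wit (A ^\<^sub>m 2) (B ^\<^sub>m 2) P Q" by (rule similar_mat_wit_pow[OF sim])
  hence "mat_trace (A * A) = mat_trace (B * B)"
    using A B by (simp add: numeral_2_eq_2 mat_trace_similar)
  also have "\<dots> = (\<Sum>i<n. (B $$ (i,i))\<^sup>2)"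
    unfolding mat_trace_def using B
    by (intro sum.cong) (auto simp: upper_triangular_mult_diag[OF B ut] simp del: index_mult_mat(1))
  finally show "mat_trace (A * A) = (\<Sum>e\<leftarrow>es. e\<^sup>2)"
    unfolding es by (simp add: sum_list_sum_nth lessThan_atLeast0)
qed

lemma symmetric_char_poly_eq_mat_trace:
  fixes A B :: "real mat"
  assumes A: "A \<in> carrier_mat n n" and sym: "\<And>i j. i < n \<Longrightarrow> j < n \<Longrightarrow> A $$ (i,j) = A $$ (j,i)"
    and B: "B \<in> carrier_mat n n" and cp: "char_poly A = char_poly B"
  shows "mat_trace A = mat_trace B" and "mat_trace (A * A) = mat_trace (B * B)"
proof -
  obtain es where es: "char_poly A = (\<Prod>e\<leftarrow>es. [:-e, 1:])" using symmetric_char_poly_splits[OF A sym] .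
  note A_split = mat_trace_split_char_poly[OF A es] and B_split = mat_trace_split_char_poly[OF B es[unfolded cp]]
  show "mat_trace A = mat_trace B" using A_split(1) B_split(1) by simp
  show "mat_trace (A * A) = mat_trace (B * B)" using A_split(2) B_split(2) by simp
qed

section \<open>Determinants and equitable partitions\<close>

lemma det_permute_rows_cols:
  fixes A :: "'a :: idom mat"
  assumes A: "A \<in> carrier_mat N N" and p: "p permutes {0..<N}"
  shows "det (mat N N (\<lambda>(i,j). A $$ (p i, p j))) = det A"
proof -
  define A_rows where "A_rows = mat N N (\<lambda>(i,j). A $$ (p i, j))"
  have pN: "i < N \<Longrightarrow> p i < N" for i using p by (simp add: permutes_in_image)
  have "mat N N (\<lambda>(i,j). A $$ (p i, p j))
      = transpose_mat (mat N N (\<lambda>(i,j). transpose_mat A_rows $$ (p i, j)))"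
    by (rule eq_matI) (auto simp: A_rows_def pN)
  hence "det (mat N N (\<lambda>(i,j). A $$ (p i, p j)))
      = det (transpose_mat (mat N N (\<lambda>(i,j). transpose_mat A_rows $$ (p i, j))))"
    by (rule arg_cong)
  also have "\<dots> = det (mat N N (\<lambda>(i,j). transpose_mat A_rows $$ (p i, j)))"
    by (rule det_transpose[of _ N]) simp
  also have "\<dots> = signof p * det (transpose_mat A_rows)"
    by (rule det_permute_rows[OF _ p]) (simp add: A_rows_def)
  also have "det (transpose_mat A_rows) = signof p * det A"
    unfolding A_rows_def by (subst det_transpose[of _ N]) (simp_all add: det_permute_rows[OF A p])
  finally show ?thesis by (simp add: sign_def)
qed

lemma char_poly_permute_rows_cols:
  fixes A :: "'a :: idom mat"
  assumes A: "A \<in> carrier_mat N N" and p: "p permutes {0..<N}"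
  shows "char_poly (mat N N (\<lambda>(i,j). A $$ (p i, p j))) = char_poly A"
proof -
  have pN: "i < N \<Longrightarrow> p i < N" for i using p by (simp add: permutes_in_image)
  have p_eq: "i < N \<Longrightarrow> j < N \<Longrightarrow> p i = p j \<longleftrightarrow> i = j" for i j
    using p by (metis permutes_inj inj_eq)
  have "char_poly_matrix (mat N N (\<lambda>(i,j). A $$ (p i, p j))) =
      mat N N (\<lambda>(i,j). char_poly_matrix A $$ (p i, p j))"
    by (rule eq_matI) (use A in \<open>auto simp: char_poly_matrix_def pN p_eq\<close>)
  thus ?thesis unfolding char_poly_def by (simp add: det_permute_rows_cols[OF _ p] A)
qed

lemma det_lower_unitriangular:
  fixes L :: "'a :: comm_ring_1 mat"
  assumes L: "L \<in> carrier_mat N N" and upper: "\<And>i j. i < j \<Longrightarrow> j < N \<Longrightarrow> L $$ (i,j) = 0"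
    and diag: "\<And>i. i < N \<Longrightarrow> L $$ (i,i) = 1"
  shows "det L = 1"
proof -
  have "diag_mat L = replicate N 1"
    using L diag by (auto simp: diag_mat_def list_eq_iff_nth_eq)
  thus ?thesis using det_lower_triangular[OF upper L] by simp
qed

definition class_elim_mat :: "nat \<Rightarrow> nat \<Rightarrow> (nat \<Rightarrow> nat) \<Rightarrow> 'a :: comm_ring_1 \<Rightarrow> 'a mat" where
  "class_elim_mat N a cl c = mat N N (\<lambda>(k,l). if k = l then 1 else if l < a \<and> cl k = l then c else 0)"

lemma class_elim_mat_dim [simp]:
  "dim_row (class_elim_mat N a cl c) = N" "dim_col (class_elim_mat N a cl c) = N"
  by (simp_all add: class_elim_mat_def)

lemma class_elim_mat_carrier [simp]: "class_elim_mat N a cl c \<in> carrier_mat N N"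
  by (simp add: class_elim_mat_def)

lemma det_class_elim_mat:
  assumes cl_rep: "\<And>k. k < a \<Longrightarrow> cl k = k"
  shows "det (class_elim_mat N a cl c) = 1"
  by (rule det_lower_unitriangular[OF class_elim_mat_carrier])
    (auto simp: class_elim_mat_def, metis cl_rep less_trans nat_neq_iff)

lemma mult_class_elim_mat_index:
  assumes M: "M \<in> carrier_mat N N" and cl_rep: "\<And>k. k < a \<Longrightarrow> cl k = k" and k: "k < N" and j: "j < N"
  shows "(M * class_elim_mat N a cl 1) $$ (k,j) = (if j < a then (\<Sum>l | l < N \<and> cl l = j. M $$ (k,l)) else M $$ (k,j))"
proof -
  have "(M * class_elim_mat N a cl 1) $$ (k,j) = (\<Sum>l<N. M $$ (k,l) * class_elim_mat N a cl 1 $$ (l,j))"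
    using M k j by (simp add: scalar_prod_def lessThan_atLeast0)
  also have "\<dots> = (\<Sum>l<N. if (if j < a then cl l = j else l = j) then M $$ (k,l) else 0)"
    by (rule sum.cong[OF refl]) (use j cl_rep[of j] in \<open>auto simp: class_elim_mat_def\<close>)
  also have "\<dots> = (if j < a then (\<Sum>l | l < N \<and> cl l = j. M $$ (k,l)) else M $$ (k,j))"
    using j by (cases "j < a") (auto simp: sum.inter_filter[symmetric] lessThan_def conj_commute)
  finally show ?thesis .
qed

lemma class_elim_mat_mult_index:
  assumes B: "B \<in> carrier_mat N N" and cl_rep: "\<And>k. k < a \<Longrightarrow> cl k = k"
    and cl_range: "\<And>k. k < N \<Longrightarrow> cl k < a" and k: "k < N" and j: "j < N"
  shows "(class_elim_mat N a cl (-1) * B) $$ (k,j) = B $$ (k,j) - (if a \<le> k then B $$ (cl k, j) else 0)"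
proof -
  have "(class_elim_mat N a cl (-1) * B) $$ (k,j) = (\<Sum>l<N. class_elim_mat N a cl (-1) $$ (k,l) * B $$ (l,j))"
    using B k j by (simp add: scalar_prod_def lessThan_atLeast0)
  also have "\<dots> = (\<Sum>l<N. (if l = k then B $$ (l,j) else 0) - (if a \<le> k \<and> l = cl k then B $$ (l,j) else 0))"
    by (rule sum.cong[OF refl]) (use k cl_rep[of k] cl_range[of k] in \<open>auto simp: class_elim_mat_def\<close>)
  also have "\<dots> = B $$ (k,j) - (if a \<le> k then B $$ (cl k, j) else 0)"
    using k cl_range[of k] by (simp add: sum_subtractf)
  finally show ?thesis .
qed

text \<open>Summing the columns of each class into its representative and then subtracting from every
  row the row of its representative makes the matrix block upper triangular, with the quotient
  matrix of class sums in the top left corner.\<close>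
lemma det_equitable_partition:
  fixes M :: "'a :: idom mat" and cl :: "nat \<Rightarrow> nat"
  assumes M: "M \<in> carrier_mat N N" and aN: "a \<le> N"
    and cl_rep: "\<And>k. k < a \<Longrightarrow> cl k = k" and cl_range: "\<And>k. k < N \<Longrightarrow> cl k < a"
    and equitable: "\<And>k j. a \<le> k \<Longrightarrow> k < N \<Longrightarrow> j < a \<Longrightarrow>
        (\<Sum>l | l < N \<and> cl l = j. M $$ (k,l)) = (\<Sum>l | l < N \<and> cl l = j. M $$ (cl k,l))"
  shows "det M = det (mat a a (\<lambda>(k,j). \<Sum>l | l < N \<and> cl l = j. M $$ (k,l))) *
     det (mat (N - a) (N - a) (\<lambda>(k,j). M $$ (k + a, j + a) - M $$ (cl (k + a), j + a)))"
proof -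
  let ?P = "class_elim_mat N a cl (1::'a)" and ?R = "class_elim_mat N a cl (-1::'a)"
  define T where "T = ?R * (M * ?P)"
  define S where "S k j = (if j < a then (\<Sum>l | l < N \<and> cl l = j. M $$ (k,l)) else M $$ (k,j))" for k j
  define Q where "Q = mat a a (\<lambda>(k,j). \<Sum>l | l < N \<and> cl l = j. M $$ (k,l))"
  define D where "D = mat (N - a) (N - a) (\<lambda>(k,j). M $$ (k + a, j + a) - M $$ (cl (k + a), j + a))"
  define U where "U = mat a (N - a) (\<lambda>(k,j). T $$ (k, j + a))"
  have MP: "M * ?P \<in> carrier_mat N N" using M by simp
  have T_index: "T $$ (k,j) = S k j - (if a \<le> k then S (cl k) j else 0)" if "k < N" "j < N" for k j
  proof -
    have "T $$ (k,j) = (M * ?P) $$ (k,j) - (if a \<le> k then (M * ?P) $$ (cl k, j) else 0)"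
      unfolding T_def by (rule class_elim_mat_mult_index[OF MP cl_rep cl_range that])
    moreover have "(M * ?P) $$ (k,j) = S k j"
      unfolding S_def by (rule mult_class_elim_mat_index[OF M cl_rep that])
    moreover have "(M * ?P) $$ (cl k, j) = S (cl k) j" if "a \<le> k"
      unfolding S_def using that \<open>k < N\<close> \<open>j < N\<close> cl_range[of k]
      by (intro mult_class_elim_mat_index[OF M cl_rep]) auto
    ultimately show ?thesis by auto
  qed
  have "det T = det ?R * (det M * det ?P)"
    unfolding T_def by (simp only: det_mult[OF class_elim_mat_carrier MP] det_mult[OF M class_elim_mat_carrier])
  hence "det M = det T" by (simp add: det_class_elim_mat[OF cl_rep])
  also have "T = four_block_mat Q U (0\<^sub>m (N - a) a) D"
  proof (rule eq_matI)
    fix i j assume "i < dim_row (four_block_mat Q U (0\<^sub>m (N - a) a) D)"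
      and "j < dim_col (four_block_mat Q U (0\<^sub>m (N - a) a) D)"
    hence i: "i < N" and j: "j < N" using aN by (auto simp: Q_def D_def)
    show "T $$ (i,j) = four_block_mat Q U (0\<^sub>m (N - a) a) D $$ (i,j)"
      using i j cl_range[of i] equitable[of i j] cl_rep[of i]
      by (cases "i < a") (auto simp: four_block_mat_def Q_def U_def D_def T_index S_def)
  qed (use aN M in \<open>auto simp: T_def Q_def D_def\<close>)
  also have "det (four_block_mat Q U (0\<^sub>m (N - a) a) D) = det Q * det D"
    by (rule det_four_block_mat_lower_left_zero) (auto simp: Q_def U_def D_def)
  finally show ?thesis unfolding Q_def D_def .
qed

definition eval_char_mat :: "real mat \<Rightarrow> real \<Rightarrow> real mat" where
  "eval_char_mat A x = mat (dim_row A) (dim_row A) (\<lambda>(i,j). (if i = j then x else 0) - A $$ (i,j))"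

lemma eval_char_mat_carrier [simp]: "A \<in> carrier_mat N N \<Longrightarrow> eval_char_mat A x \<in> carrier_mat N N"
  unfolding eval_char_mat_def by simp

lemma poly_char_poly_eq_det:
  assumes A: "A \<in> carrier_mat N N"
  shows "poly (char_poly A) x = det (eval_char_mat A x)"
proof -
  have "- char_matrix A x = eval_char_mat A x"
    by (rule eq_matI) (use A in \<open>auto simp: char_matrix_def eval_char_mat_def\<close>)
  thus ?thesis using char_poly_matrix[OF A] by simp
qed

section \<open>The A_alpha matrix of a graph\<close>

lemma A_alpha_carrier [simp]: "A_alpha \<alpha> n E \<in> carrier_mat n n"
  unfolding A_alpha_def deg_mat_def adj_mat_def by simp

lemma A_alpha_dim [simp]: "dim_row (A_alpha \<alpha> n E) = n" "dim_col (A_alpha \<alpha> n E) = n"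
  unfolding A_alpha_def deg_mat_def adj_mat_def by simp_all

lemma A_alpha_index:
  "i < n \<Longrightarrow> j < n \<Longrightarrow> A_alpha \<alpha> n E $$ (i,j) =
     (if i = j then \<alpha> * real (degree n E i) else 0) + (1 - \<alpha>) * (if E i j then 1 else 0)"
  unfolding A_alpha_def deg_mat_def adj_mat_def by simp

lemma A_alpha_symmetric:
  assumes "is_graph n E" "i < n" "j < n"
  shows "A_alpha \<alpha> n E $$ (i,j) = A_alpha \<alpha> n E $$ (j,i)"
  using assms by (auto simp: A_alpha_index is_graph_def)

lemma sum_indicator_card: "finite A \<Longrightarrow> (\<Sum>l\<in>A. if P l then 1 else 0) = real (card {l\<in>A. P l})"
  by (simp add: sum.inter_filter[symmetric])

lemma sum_adjacent_eq_degree: "(\<Sum>j<n. if E i j then 1 else 0) = real (degree n E i)"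
  unfolding degree_def by (simp add: sum_indicator_card lessThan_def)

lemma A_alpha_char_poly_graph_iso:
  assumes "graph_iso n E n' E'"
  shows "char_poly (A_alpha \<alpha> n E) = char_poly (A_alpha \<alpha> n' E')"
proof -
  obtain f where f: "bij_betw f {..<n} {..<n'}" and adj: "\<And>i j. i < n \<Longrightarrow> j < n \<Longrightarrow> E i j \<longleftrightarrow> E' (f i) (f j)"
    using assms unfolding graph_iso_def by blast
  have n': "n' = n" using bij_betw_same_card[OF f] by simp
  define p where "p i = (if i < n then f i else i)" for i
  have fn: "i < n \<Longrightarrow> f i < n" for i using f n' by (auto simp: bij_betw_def)
  have f_eq: "i < n \<Longrightarrow> j < n \<Longrightarrow> f i = f j \<longleftrightarrow> i = j" for i j
    using f by (auto simp: bij_betw_def inj_on_def)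
  have "bij_betw p {0..<n} {0..<n}"
    using f[unfolded n'] unfolding lessThan_atLeast0[symmetric] by (rule bij_betw_cong[THEN iffD1, rotated]) (simp add: p_def)
  hence p: "p permutes {0..<n}" by (rule bij_imp_permutes) (simp add: p_def)
  have degree_eq: "degree n E i = degree n E' (f i)" if i: "i < n" for i
  proof -
    have "f ` {j. j < n \<and> E i j} = {j. j < n \<and> E' (f i) j}"
    proof (intro equalityI subsetI)
      fix w assume "w \<in> {j. j < n \<and> E' (f i) j}"
      moreover from this obtain j where "j < n" "w = f j"
        using f n' by (auto simp: bij_betw_def)
      ultimately show "w \<in> f ` {j. j < n \<and> E i j}" using adj i by auto
    qed (use adj fn i in auto)
    moreover have "inj_on f {j. j < n \<and> E i j}"
      using f by (auto simp: bij_betw_def intro: inj_on_subset)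
    ultimately show ?thesis unfolding degree_def by (metis card_image)
  qed
  have "A_alpha \<alpha> n E = mat n n (\<lambda>(i,j). A_alpha \<alpha> n E' $$ (p i, p j))"
    by (rule eq_matI) (auto simp: A_alpha_index p_def fn degree_eq f_eq adj)
  thus ?thesis using char_poly_permute_rows_cols[OF A_alpha_carrier p] n' by simp
qed

lemma A_alpha_cospectral_char_poly:
  assumes "is_graph n E" "is_graph n' E'" "A_alpha_cospectral \<alpha> n E n' E'"
  shows "char_poly (A_alpha \<alpha> n E) = char_poly (A_alpha \<alpha> n' E')"
  using assms symmetric_char_poly_eqI[OF A_alpha_carrier A_alpha_symmetric A_alpha_carrier A_alpha_symmetric]
  by (auto simp: A_alpha_cospectral_def eig_mult_def)

lemma A_alpha_mat_trace:
  assumes "is_graph n E"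
  shows "mat_trace (A_alpha \<alpha> n E) = \<alpha> * (\<Sum>i<n. real (degree n E i))"
  using assms by (simp add: mat_trace_def A_alpha_index is_graph_def sum_distrib_left)

lemma A_alpha_mat_trace_square:
  assumes G: "is_graph n E"
  shows "mat_trace (A_alpha \<alpha> n E * A_alpha \<alpha> n E) =
    \<alpha>\<^sup>2 * (\<Sum>i<n. (real (degree n E i))\<^sup>2) + (1 - \<alpha>)\<^sup>2 * (\<Sum>i<n. real (degree n E i))"
proof -
  let ?A = "A_alpha \<alpha> n E"
  have diag: "(?A * ?A) $$ (i,i) = \<alpha>\<^sup>2 * (real (degree n E i))\<^sup>2 + (1 - \<alpha>)\<^sup>2 * real (degree n E i)"
    if i: "i < n" for i
  proof -
    have "(?A * ?A) $$ (i,i) = (\<Sum>k<n. ?A $$ (i,k) * ?A $$ (k,i))"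
      using i by (simp add: scalar_prod_def lessThan_atLeast0)
    also have "\<dots> = (\<Sum>k<n. (if k = i then \<alpha>\<^sup>2 * (real (degree n E i))\<^sup>2 else 0) + (1 - \<alpha>)\<^sup>2 * (if E i k then 1 else 0))"
      using i G by (intro sum.cong refl) (auto simp: A_alpha_index is_graph_def power2_eq_square)
    also have "\<dots> = \<alpha>\<^sup>2 * (real (degree n E i))\<^sup>2 + (1 - \<alpha>)\<^sup>2 * real (degree n E i)"
      using i by (simp add: sum.distrib sum_distrib_left[symmetric] sum_adjacent_eq_degree)
    finally show ?thesis .
  qed
  have "mat_trace (?A * ?A) = (\<Sum>i<n. \<alpha>\<^sup>2 * (real (degree n E i))\<^sup>2 + (1 - \<alpha>)\<^sup>2 * real (degree n E i))"
    unfolding mat_trace_def by (intro sum.cong) (auto simp: diag simp del: index_mult_mat(1))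
  thus ?thesis by (simp add: sum.distrib sum_distrib_left)
qed

lemma A_alpha_char_poly_degree_sums:
  assumes "0 < \<alpha>" and X: "is_graph N X" and Y: "is_graph N Y"
    and cp: "char_poly (A_alpha \<alpha> N X) = char_poly (A_alpha \<alpha> N Y)"
  shows "(\<Sum>i<N. real (degree N X i)) = (\<Sum>i<N. real (degree N Y i))"
    and "(\<Sum>i<N. (real (degree N X i))\<^sup>2) = (\<Sum>i<N. (real (degree N Y i))\<^sup>2)"
proof -
  note traces = symmetric_char_poly_eq_mat_trace[OF A_alpha_carrier A_alpha_symmetric[OF X] A_alpha_carrier cp]
  show sum_eq: "(\<Sum>i<N. real (degree N X i)) = (\<Sum>i<N. real (degree N Y i))"
    using traces(1) \<open>0 < \<alpha>\<close> by (simp add: A_alpha_mat_trace[OF X] A_alpha_mat_trace[OF Y])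
  show "(\<Sum>i<N. (real (degree N X i))\<^sup>2) = (\<Sum>i<N. (real (degree N Y i))\<^sup>2)"
    using traces(2) \<open>0 < \<alpha>\<close> by (simp add: A_alpha_mat_trace_square[OF X] A_alpha_mat_trace_square[OF Y] sum_eq)
qed

lemma A_alpha_row_sum_regular:
  assumes "regular n X r" and k: "k < n"
  shows "(\<Sum>l<n. A_alpha \<alpha> n X $$ (k,l)) = real r"
proof -
  have "(\<Sum>l<n. A_alpha \<alpha> n X $$ (k,l)) = \<alpha> * real (degree n X k) + (1 - \<alpha>) * real (degree n X k)"
    using k by (simp add: A_alpha_index sum.distrib sum_distrib_left[symmetric] sum_adjacent_eq_degree)
  thus ?thesis using assms by (simp add: regular_def algebra_simps)
qed

definition deflated_char_mat :: "real mat \<Rightarrow> real \<Rightarrow> real mat" where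
  "deflated_char_mat A x = mat (dim_row A - 1) (dim_row A - 1)
     (\<lambda>(k,j). eval_char_mat A x $$ (k + 1, j + 1) - eval_char_mat A x $$ (0, j + 1))"

text \<open>Constant row sums make the whole vertex set a one-class equitable partition.\<close>
lemma poly_char_poly_regular:
  assumes R: "regular n X r" and n: "n \<ge> 1"
  shows "poly (char_poly (A_alpha \<alpha> n X)) x = (x - real r) * det (deflated_char_mat (A_alpha \<alpha> n X) x)"
proof -
  let ?M = "eval_char_mat (A_alpha \<alpha> n X) x"
  have row_sum: "(\<Sum>l | l < n \<and> (0::nat) = j. ?M $$ (k,l)) = (if j = 0 then x - real r else 0)"
    if k: "k < n" for k j
  proof (cases "j = 0")
    case True
    have "(\<Sum>l | l < n. ?M $$ (k,l)) = (\<Sum>l<n. (if k = l then x else 0) - A_alpha \<alpha> n X $$ (k,l))"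
      using k by (simp add: eval_char_mat_def lessThan_def)
    thus ?thesis using True k A_alpha_row_sum_regular[OF R k] by (simp add: sum_subtractf)
  qed simp
  have "det ?M = det (mat 1 1 (\<lambda>(k,j). \<Sum>l | l < n \<and> (0::nat) = j. ?M $$ (k,l))) *
     det (mat (n - 1) (n - 1) (\<lambda>(k,j). ?M $$ (k + 1, j + 1) - ?M $$ (0, j + 1)))"
  proof (rule det_equitable_partition)
    fix k j :: nat assume "1 \<le> k" "k < n" "j < 1"
    thus "(\<Sum>l | l < n \<and> (0::nat) = j. ?M $$ (k,l)) = (\<Sum>l | l < n \<and> (0::nat) = j. ?M $$ (0,l))"
      using row_sum[of k j] row_sum[of 0 j] by simp
  qed (use n in auto)
  also have "det (mat 1 1 (\<lambda>(k,j). \<Sum>l | l < n \<and> (0::nat) = j. ?M $$ (k,l))) = x - real r"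
    using row_sum[of 0 0] n by (simp add: det_single)
  finally show ?thesis unfolding deflated_char_mat_def poly_char_poly_eq_det[OF A_alpha_carrier] by simp
qed

section \<open>Joins with a complete graph\<close>

lemma join_is_graph: "is_graph n X \<Longrightarrow> is_graph (n + m) (join_complete n X m)"
  unfolding is_graph_def join_complete_def by auto

lemma join_degree_left:
  assumes "is_graph n X" and "i < n"
  shows "degree (n + m) (join_complete n X m) i = degree n X i + m"
proof -
  have "{j. j < n + m \<and> join_complete n X m i j} = {j. j < n \<and> X i j} \<union> {n..<n + m}"
    using assms unfolding join_complete_def is_graph_def by auto
  moreover have "card ({j. j < n \<and> X i j} \<union> {n..<n + m}) = card {j. j < n \<and> X i j} + m"
    by (subst card_Un_disjoint) auto
  ultimately show ?thesis unfolding degree_def by simp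
qed

lemma join_degree_right:
  assumes "n \<le> i" and "i < n + m"
  shows "degree (n + m) (join_complete n X m) i = n + m - 1"
proof -
  have "{j. j < n + m \<and> join_complete n X m i j} = {..<n + m} - {i}"
    using assms unfolding join_complete_def by auto
  thus ?thesis unfolding degree_def using assms by simp
qed

lemma join_degree_sum:
  fixes f :: "nat \<Rightarrow> real"
  assumes "is_graph n X"
  shows "(\<Sum>i<n + m. f (degree (n + m) (join_complete n X m) i))
    = (\<Sum>i<n. f (degree n X i + m)) + real m * f (n + m - 1)"
proof -
  have "(\<Sum>i<n + m. f (degree (n + m) (join_complete n X m) i))
      = (\<Sum>i<n. f (degree (n + m) (join_complete n X m) i)) + (\<Sum>i\<in>{n..<n + m}. f (degree (n + m) (join_complete n X m) i))"
    by (simp add: lessThan_atLeast0 sum.atLeastLessThan_concat)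
  also have "(\<Sum>i<n. f (degree (n + m) (join_complete n X m) i)) = (\<Sum>i<n. f (degree n X i + m))"
    by (rule sum.cong) (simp_all add: join_degree_left[OF assms])
  also have "(\<Sum>i\<in>{n..<n + m}. f (degree (n + m) (join_complete n X m) i)) = (\<Sum>i\<in>{n..<n + m}. f (n + m - 1))"
    by (rule sum.cong) (simp_all add: join_degree_right)
  finally show ?thesis by simp
qed

lemma A_alpha_join_index:
  assumes "is_graph n X" and "i < n + m" and "j < n + m"
  shows "A_alpha \<alpha> (n + m) (join_complete n X m) $$ (i,j) =
    (if i < n \<and> j < n then A_alpha \<alpha> n X $$ (i,j) + (if i = j then \<alpha> * real m else 0)
     else if i = j then \<alpha> * real (n + m - 1) else 1 - \<alpha>)"
  using assms
  by (auto simp: A_alpha_index join_degree_left join_degree_right join_complete_def is_graph_def distrib_left)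

lemma A_alpha_join_row_sum_left:
  assumes G: "is_graph n X" and R: "regular n X r" and i0: "i0 < n + m"
  shows "(\<Sum>i<n. A_alpha \<alpha> (n + m) (join_complete n X m) $$ (i0,i)) =
    (if i0 < n then real r + \<alpha> * real m else (1 - \<alpha>) * real n)"
proof (cases "i0 < n")
  case True
  have "(\<Sum>i<n. A_alpha \<alpha> (n + m) (join_complete n X m) $$ (i0,i))
      = (\<Sum>i<n. A_alpha \<alpha> n X $$ (i0,i)) + (\<Sum>i<n. if i0 = i then \<alpha> * real m else 0)"
    using True i0 by (simp add: A_alpha_join_index[OF G] sum.distrib)
  thus ?thesis using True A_alpha_row_sum_regular[OF R True] by simp
qed (use i0 in \<open>simp add: A_alpha_join_index[OF G]\<close>)

lemma A_alpha_join_row_sum_right: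
  assumes G: "is_graph n X" and i0: "i0 < n + m"
  shows "(\<Sum>i\<in>{n..<n + m}. A_alpha \<alpha> (n + m) (join_complete n X m) $$ (i0,i)) =
    (if i0 < n then (1 - \<alpha>) * real m else \<alpha> * real (n + m - 1) + (1 - \<alpha>) * real (m - 1))"
proof (cases "i0 < n")
  case False
  have "(\<Sum>i\<in>{n..<n + m}. A_alpha \<alpha> (n + m) (join_complete n X m) $$ (i0,i))
      = (\<Sum>i\<in>{n..<n + m}. if i = i0 then \<alpha> * real (n + m - 1) else 1 - \<alpha>)"
    using False i0 by (intro sum.cong) (auto simp: A_alpha_join_index[OF G])
  also have "\<dots> = \<alpha> * real (n + m - 1) + (\<Sum>i\<in>{n..<n + m} - {i0}. 1 - \<alpha>)"
    using False i0 by (subst sum.remove[of _ i0]) (auto intro!: sum.cong)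
  finally show ?thesis using False i0 by simp
qed (use i0 in \<open>simp add: A_alpha_join_index[OF G]\<close>)

text \<open>One vertex of G and one vertex of K_m come first, to serve as the class representatives in
  det_equitable_partition; the other vertices of G follow in their original order.\<close>
definition join_reorder :: "nat \<Rightarrow> nat \<Rightarrow> nat" where
  "join_reorder n k = (if k = 0 then 0 else if k = 1 then n else if k \<le> n then k - 1 else k)"

definition join_part :: "nat \<Rightarrow> nat \<Rightarrow> nat" where
  "join_part n k = (if join_reorder n k < n then 0 else 1)"

lemma join_reorder_bij:
  assumes "n \<ge> 1" and "m \<ge> 1"
  shows "bij_betw (join_reorder n) {..<n + m} {..<n + m}"
proof -
  have inj: "inj_on (join_reorder n) {..<n + m}"
    using assms unfolding inj_on_def join_reorder_def by auto
  moreover have "join_reorder n ` {..<n + m} \<subseteq> {..<n + m}"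
    using assms unfolding join_reorder_def by auto
  ultimately show ?thesis by (simp add: bij_betw_def endo_inj_surj)
qed

lemma join_reorder_permutes:
  assumes "n \<ge> 1" and "m \<ge> 1"
  shows "join_reorder n permutes {0..<n + m}"
proof (rule bij_imp_permutes)
  show "bij_betw (join_reorder n) {0..<n + m} {0..<n + m}"
    using join_reorder_bij[OF assms(1,2)] by (simp add: lessThan_atLeast0)
qed (use assms in \<open>auto simp: join_reorder_def\<close>)

lemma sum_join_part:
  assumes "n \<ge> 1" and "m \<ge> 1"
  shows "(\<Sum>l | l < n + m \<and> join_part n l = j. f (join_reorder n l))
    = (\<Sum>i | i < n + m \<and> (if i < n then 0 else 1) = j. f i)"
proof -
  have "bij_betw (join_reorder n) {l \<in> {..<n + m}. join_part n l = j} {i \<in> {..<n + m}. (if i < n then 0 else 1) = j}"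
    by (rule bij_betw_Collect[OF join_reorder_bij[OF assms(1,2)]]) (simp add: join_part_def)
  thus ?thesis by (simp add: sum.reindex_bij_betw)
qed

definition join_reordered_char_mat :: "real \<Rightarrow> nat \<Rightarrow> nat \<Rightarrow> (nat \<Rightarrow> nat \<Rightarrow> bool) \<Rightarrow> real \<Rightarrow> real mat" where
  "join_reordered_char_mat \<alpha> n m X x = mat (n + m) (n + m) (\<lambda>(k,l). (if k = l then x else 0)
     - A_alpha \<alpha> (n + m) (join_complete n X m) $$ (join_reorder n k, join_reorder n l))"

lemma det_join_reordered_char_mat:
  assumes "n \<ge> 1" and "m \<ge> 1"
  shows "det (join_reordered_char_mat \<alpha> n m X x) = poly (char_poly (A_alpha \<alpha> (n + m) (join_complete n X m))) x"
proof -
  let ?A = "A_alpha \<alpha> (n + m) (join_complete n X m)"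
  let ?P = "mat (n + m) (n + m) (\<lambda>(i,j). ?A $$ (join_reorder n i, join_reorder n j))"
  have "join_reordered_char_mat \<alpha> n m X x = eval_char_mat ?P x"
    by (rule eq_matI) (auto simp: join_reordered_char_mat_def eval_char_mat_def)
  moreover have "char_poly ?P = char_poly ?A"
    by (rule char_poly_permute_rows_cols[OF A_alpha_carrier join_reorder_permutes[OF assms(1,2)]])
  ultimately show ?thesis using poly_char_poly_eq_det[of ?P "n + m" x] by simp
qed

definition join_quotient_mat :: "real \<Rightarrow> nat \<Rightarrow> nat \<Rightarrow> nat \<Rightarrow> real mat" where
  "join_quotient_mat \<alpha> n m r = mat 2 2 (\<lambda>(k,j).
     if k = 0 then (if j = 0 then real r + \<alpha> * real m else (1 - \<alpha>) * real m)
     else (if j = 0 then (1 - \<alpha>) * real n else \<alpha> * real (n + m - 1) + (1 - \<alpha>) * real (m - 1)))"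

lemma join_class_sums:
  assumes G: "is_graph n X" and R: "regular n X r" and n: "n \<ge> 1" and m: "m \<ge> 1"
    and k: "k < n + m" and j: "j < 2"
  shows "(\<Sum>l | l < n + m \<and> join_part n l = j. join_reordered_char_mat \<alpha> n m X x $$ (k,l))
    = eval_char_mat (join_quotient_mat \<alpha> n m r) x $$ (join_part n k, j)"
proof -
  let ?A = "A_alpha \<alpha> (n + m) (join_complete n X m)"
  let ?i0 = "join_reorder n k"
  have i0: "?i0 < n + m" using join_reorder_bij[OF n m] k by (auto simp: bij_betw_def)
  have "(\<Sum>l | l < n + m \<and> join_part n l = j. join_reordered_char_mat \<alpha> n m X x $$ (k,l))
      = (\<Sum>l | l < n + m \<and> join_part n l = j. if k = l then x else 0)
        - (\<Sum>l | l < n + m \<and> join_part n l = j. ?A $$ (?i0, join_reorder n l))"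
    unfolding sum_subtractf[symmetric] using k by (intro sum.cong) (auto simp: join_reordered_char_mat_def)
  also have "(\<Sum>l | l < n + m \<and> join_part n l = j. if k = l then x else 0) = (if join_part n k = j then x else 0)"
    using k by (simp add: sum.delta)
  also have "(\<Sum>l | l < n + m \<and> join_part n l = j. ?A $$ (?i0, join_reorder n l))
      = (\<Sum>i | i < n + m \<and> (if i < n then 0 else 1) = j. ?A $$ (?i0, i))"
    by (rule sum_join_part[OF n m, where f = "\<lambda>i. ?A $$ (?i0, i)"])
  also have "\<dots> = (if j = 0 then (\<Sum>i<n. ?A $$ (?i0, i)) else (\<Sum>i\<in>{n..<n + m}. ?A $$ (?i0, i)))"
    using j by (cases "j = 0") (auto intro!: sum.cong simp: less_2_cases_iff)
  finally show ?thesis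
    using j A_alpha_join_row_sum_left[OF G R i0] A_alpha_join_row_sum_right[OF G i0]
    by (auto simp: eval_char_mat_def join_quotient_mat_def join_part_def less_2_cases_iff)
qed

lemma join_reordered_lower_block:
  fixes \<alpha> x :: real
  assumes G: "is_graph n X" and n: "n \<ge> 1" and m: "m \<ge> 1"
  defines "M \<equiv> join_reordered_char_mat \<alpha> n m X x"
  shows "mat (n + m - 2) (n + m - 2) (\<lambda>(k,j). M $$ (k + 2, j + 2) - M $$ (join_part n (k + 2), j + 2)) =
     four_block_mat (deflated_char_mat (A_alpha \<alpha> n X) (x - \<alpha> * real m)) (0\<^sub>m (n - 1) (m - 1))
       (0\<^sub>m (m - 1) (n - 1)) ((x - \<alpha> * real (n + m - 1) + (1 - \<alpha>)) \<cdot>\<^sub>m 1\<^sub>m (m - 1))"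
proof (rule eq_matI)
  fix k j assume "k < dim_row (four_block_mat (deflated_char_mat (A_alpha \<alpha> n X) (x - \<alpha> * real m))
       (0\<^sub>m (n - 1) (m - 1)) (0\<^sub>m (m - 1) (n - 1)) ((x - \<alpha> * real (n + m - 1) + (1 - \<alpha>)) \<cdot>\<^sub>m 1\<^sub>m (m - 1)))"
    and "j < dim_col (four_block_mat (deflated_char_mat (A_alpha \<alpha> n X) (x - \<alpha> * real m))
       (0\<^sub>m (n - 1) (m - 1)) (0\<^sub>m (m - 1) (n - 1)) ((x - \<alpha> * real (n + m - 1) + (1 - \<alpha>)) \<cdot>\<^sub>m 1\<^sub>m (m - 1)))"
  hence k: "k < n + m - 2" and j: "j < n + m - 2" using n m by (auto simp: deflated_char_mat_def)
  have reorder_left: "join_reorder n (i + 2) = i + 1 \<and> join_part n (i + 2) = 0" if "i < n - 1" for i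
    using that by (simp add: join_reorder_def join_part_def)
  have reorder_right: "join_reorder n (i + 2) = i + 2 \<and> join_part n (i + 2) = 1" if "n - 1 \<le> i" for i
    using that n by (simp add: join_reorder_def join_part_def)
  have reorder_reps: "join_reorder n 0 = 0" "join_reorder n 1 = n" by (simp_all add: join_reorder_def)
  show "mat (n + m - 2) (n + m - 2) (\<lambda>(k,j). M $$ (k + 2, j + 2) - M $$ (join_part n (k + 2), j + 2)) $$ (k,j)
     = four_block_mat (deflated_char_mat (A_alpha \<alpha> n X) (x - \<alpha> * real m)) (0\<^sub>m (n - 1) (m - 1))
       (0\<^sub>m (m - 1) (n - 1)) ((x - \<alpha> * real (n + m - 1) + (1 - \<alpha>)) \<cdot>\<^sub>m 1\<^sub>m (m - 1)) $$ (k,j)"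
    using k j n m reorder_left[of k] reorder_left[of j] reorder_right[of k] reorder_right[of j] reorder_reps
    by (cases "k < n - 1"; cases "j < n - 1")
      (auto simp: M_def join_reordered_char_mat_def A_alpha_join_index[OF G] deflated_char_mat_def
        eval_char_mat_def four_block_mat_def Let_def)
qed (use n m in \<open>auto simp: deflated_char_mat_def\<close>)

definition join_char_factor :: "real \<Rightarrow> nat \<Rightarrow> nat \<Rightarrow> nat \<Rightarrow> real \<Rightarrow> real" where
  "join_char_factor \<alpha> n m r x =
     poly (char_poly (join_quotient_mat \<alpha> n m r)) x * (x - \<alpha> * real (n + m - 1) + (1 - \<alpha>)) ^ (m - 1)"

lemma join_char_poly_identity:
  assumes G: "is_graph n X" and R: "regular n X r" and n: "n \<ge> 1" and m: "m \<ge> 1"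
  shows "poly (char_poly (A_alpha \<alpha> (n + m) (join_complete n X m))) x * (x - \<alpha> * real m - real r) =
    join_char_factor \<alpha> n m r x * poly (char_poly (A_alpha \<alpha> n X)) (x - \<alpha> * real m)"
proof -
  let ?M = "join_reordered_char_mat \<alpha> n m X x"
  let ?Q = "join_quotient_mat \<alpha> n m r"
  let ?D = "deflated_char_mat (A_alpha \<alpha> n X) (x - \<alpha> * real m)"
  let ?c = "x - \<alpha> * real (n + m - 1) + (1 - \<alpha>)"
  have part_rep: "k < 2 \<Longrightarrow> join_part n k = k" for k
    using n by (auto simp: join_part_def join_reorder_def less_2_cases_iff)
  have "det ?M = det (mat 2 2 (\<lambda>(k,j). \<Sum>l | l < n + m \<and> join_part n l = j. ?M $$ (k,l))) *
      det (mat (n + m - 2) (n + m - 2) (\<lambda>(k,j). ?M $$ (k + 2, j + 2) - ?M $$ (join_part n (k + 2), j + 2)))"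
  proof (rule det_equitable_partition)
    fix k j :: nat assume "2 \<le> k" "k < n + m" "j < 2"
    moreover have "join_part n k < 2" by (simp add: join_part_def)
    ultimately show "(\<Sum>l | l < n + m \<and> join_part n l = j. ?M $$ (k,l))
        = (\<Sum>l | l < n + m \<and> join_part n l = j. ?M $$ (join_part n k, l))"
      using join_class_sums[OF G R n m] part_rep by simp
  qed (use n m part_rep in \<open>auto simp: join_reordered_char_mat_def join_part_def\<close>)
  also have "mat 2 2 (\<lambda>(k,j). \<Sum>l | l < n + m \<and> join_part n l = j. ?M $$ (k,l)) = eval_char_mat ?Q x"
    using n m by (intro eq_matI) (auto simp: join_class_sums[OF G R n m] part_rep eval_char_mat_def join_quotient_mat_def)
  also have "det (eval_char_mat ?Q x) = poly (char_poly ?Q) x"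
    by (rule poly_char_poly_eq_det[of _ 2, symmetric]) (simp add: join_quotient_mat_def)
  also have "det (mat (n + m - 2) (n + m - 2) (\<lambda>(k,j). ?M $$ (k + 2, j + 2) - ?M $$ (join_part n (k + 2), j + 2)))
      = det (four_block_mat ?D (0\<^sub>m (n - 1) (m - 1)) (0\<^sub>m (m - 1) (n - 1)) (?c \<cdot>\<^sub>m 1\<^sub>m (m - 1)))"
    by (simp only: join_reordered_lower_block[OF G n m])
  also have "\<dots> = det ?D * ?c ^ (m - 1)"
    by (subst det_four_block_mat_lower_left_zero[of _ "n - 1" _ "m - 1"]) (auto simp: deflated_char_mat_def)
  finally have "poly (char_poly (A_alpha \<alpha> (n + m) (join_complete n X m))) x = join_char_factor \<alpha> n m r x * det ?D"
    by (simp add: det_join_reordered_char_mat[OF n m] join_char_factor_def)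
  thus ?thesis using poly_char_poly_regular[OF R n, of \<alpha> "x - \<alpha> * real m"] by simp
qed

text \<open>The identity forces the two shifted characteristic polynomials to agree at every x that is
  not a root of the (nonzero) characteristic polynomial of the join.\<close>
lemma join_char_poly_cancel:
  assumes G1: "is_graph n X1" and R1: "regular n X1 r" and G2: "is_graph n X2" and R2: "regular n X2 r"
    and m: "m \<ge> 1"
    and cp: "char_poly (A_alpha \<alpha> (n + m) (join_complete n X1 m)) = char_poly (A_alpha \<alpha> (n + m) (join_complete n X2 m))"
  shows "char_poly (A_alpha \<alpha> n X1) = char_poly (A_alpha \<alpha> n X2)"
proof (cases "n = 0")
  case True
  have "A_alpha \<alpha> n X1 = A_alpha \<alpha> n X2" by (rule eq_matI) (use True in auto)
  thus ?thesis by simp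
next
  case False
  hence n: "n \<ge> 1" by simp
  let ?pJ = "char_poly (A_alpha \<alpha> (n + m) (join_complete n X2 m))"
  define D where "D = char_poly (A_alpha \<alpha> n X1) - char_poly (A_alpha \<alpha> n X2)"
  define S where "S = {x. poly ?pJ x * (x - \<alpha> * real m - real r) \<noteq> 0}"
  have "?pJ \<noteq> 0"
    using degree_monic_char_poly[OF A_alpha_carrier, of \<alpha> "n + m" "join_complete n X2 m"] by auto
  hence "finite ({x. poly ?pJ x = 0} \<union> {\<alpha> * real m + real r})" by (simp add: poly_roots_finite)
  moreover have "S = UNIV - ({x. poly ?pJ x = 0} \<union> {\<alpha> * real m + real r})" by (auto simp: S_def)
  ultimately have "infinite S" by (simp add: Diff_infinite_finite infinite_UNIV_char_0)
  moreover have "(\<lambda>x. x - \<alpha> * real m) ` S \<subseteq> {y. poly D y = 0}"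
  proof clarify
    fix x assume "x \<in> S"
    moreover note join_char_poly_identity[OF G1 R1 n m, of \<alpha> x] join_char_poly_identity[OF G2 R2 n m, of \<alpha> x]
    ultimately show "poly D (x - \<alpha> * real m) = 0" by (auto simp: S_def D_def cp)
  qed
  ultimately have "infinite {y. poly D y = 0}"
    by (metis finite_subset finite_imageD inj_on_diff_right)
  thus ?thesis using poly_roots_finite[of D] by (auto simp: D_def)
qed

lemma sum_squares_eq_imp_constant:
  fixes d :: "'a \<Rightarrow> real"
  assumes T: "finite T" and sum: "(\<Sum>v\<in>T. d v) = real (card T) * c"
    and sum_sq: "(\<Sum>v\<in>T. (d v)\<^sup>2) = real (card T) * c\<^sup>2" and v: "v \<in> T"
  shows "d v = c"
proof -
  have "(\<Sum>v\<in>T. (d v - c)\<^sup>2) = (\<Sum>v\<in>T. (d v)\<^sup>2) - 2 * c * (\<Sum>v\<in>T. d v) + real (card T) * c\<^sup>2"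
    by (simp add: power2_diff sum.distrib sum_subtractf sum_distrib_left sum_distrib_right algebra_simps)
  also have "\<dots> = 0" using sum sum_sq by (simp add: power2_eq_square)
  finally have "(\<Sum>v\<in>T. (d v - c)\<^sup>2) = 0" .
  hence "(d v - c)\<^sup>2 = 0" using sum_nonneg_eq_0_iff[OF T, of "\<lambda>v. (d v - c)\<^sup>2"] v by simp
  thus ?thesis by simp
qed

lemma join_char_poly_regular:
  assumes \<alpha>: "0 < \<alpha>" and X: "is_graph n X" and Y: "is_graph n Y" and R: "regular n Y r"
    and cp: "char_poly (A_alpha \<alpha> (n + m) (join_complete n X m)) = char_poly (A_alpha \<alpha> (n + m) (join_complete n Y m))"
  shows "regular n X r"
proof -
  note sums = A_alpha_char_poly_degree_sums[OF \<alpha> join_is_graph[OF X] join_is_graph[OF Y] cp]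
  have Y_sum: "(\<Sum>i<n. f (degree n Y i + m)) = real n * f (r + m)" for f :: "nat \<Rightarrow> real"
    using R by (simp add: regular_def cong: sum.cong_simp)
  define d where "d i = real (degree n X i + m)" for i
  have "(\<Sum>i<n. d i) = real n * real (r + m)"
    using sums(1) Y_sum[of real] unfolding d_def
    by (simp add: join_degree_sum[OF X, where f = real] join_degree_sum[OF Y, where f = real])
  moreover have "(\<Sum>i<n. (d i)\<^sup>2) = real n * (real (r + m))\<^sup>2"
    using sums(2) Y_sum[of "\<lambda>k. (real k)\<^sup>2"] unfolding d_def
    by (simp add: join_degree_sum[OF X, where f = "\<lambda>k. (real k)\<^sup>2"] join_degree_sum[OF Y, where f = "\<lambda>k. (real k)\<^sup>2"])
  ultimately have "d i = real (r + m)" if "i < n" for i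
    using sum_squares_eq_imp_constant[of "{..<n}" d "real (r + m)" i] that by simp
  thus ?thesis by (simp add: regular_def d_def)
qed

section \<open>Isomorphisms and dominating vertices\<close>

lemma graph_iso_sym:
  assumes "graph_iso n E n' E'"
  shows "graph_iso n' E' n E"
proof -
  obtain f where f: "bij_betw f {..<n} {..<n'}" and adj: "\<And>i j. i < n \<Longrightarrow> j < n \<Longrightarrow> E i j \<longleftrightarrow> E' (f i) (f j)"
    using assms unfolding graph_iso_def by blast
  let ?g = "inv_into {..<n} f"
  have g: "bij_betw ?g {..<n'} {..<n}" by (rule bij_betw_inv_into[OF f])
  have "E' i j \<longleftrightarrow> E (?g i) (?g j)" if "i < n'" "j < n'" for i j
    using adj[of "?g i" "?g j"] g that f by (auto simp: bij_betw_def bij_betw_inv_into_right)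
  thus ?thesis using g unfolding graph_iso_def by blast
qed

lemma graph_iso_trans:
  assumes "graph_iso n1 E1 n2 E2" and "graph_iso n2 E2 n3 E3"
  shows "graph_iso n1 E1 n3 E3"
proof -
  obtain f where f: "bij_betw f {..<n1} {..<n2}" and adj_f: "\<And>i j. i < n1 \<Longrightarrow> j < n1 \<Longrightarrow> E1 i j \<longleftrightarrow> E2 (f i) (f j)"
    using assms(1) unfolding graph_iso_def by blast
  obtain g where g: "bij_betw g {..<n2} {..<n3}" and adj_g: "\<And>i j. i < n2 \<Longrightarrow> j < n2 \<Longrightarrow> E2 i j \<longleftrightarrow> E3 (g i) (g j)"
    using assms(2) unfolding graph_iso_def by blast
  have "i < n1 \<Longrightarrow> f i < n2" for i using f by (auto simp: bij_betw_def)
  hence "E1 i j \<longleftrightarrow> E3 ((g \<circ> f) i) ((g \<circ> f) j)" if "i < n1" "j < n1" for i j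
    using that adj_f adj_g by simp
  thus ?thesis using bij_betw_trans[OF f g] unfolding graph_iso_def by blast
qed

lemma graph_iso_join:
  assumes "graph_iso n E n E'"
  shows "graph_iso (n + m) (join_complete n E m) (n + m) (join_complete n E' m)"
proof -
  obtain f where f: "bij_betw f {..<n} {..<n}" and adj: "\<And>i j. i < n \<Longrightarrow> j < n \<Longrightarrow> E i j \<longleftrightarrow> E' (f i) (f j)"
    using assms unfolding graph_iso_def by blast
  define g where "g i = (if i \<in> {..<n} then f i else id i)" for i
  have "bij_betw g ({..<n} \<union> {n..<n + m}) ({..<n} \<union> {n..<n + m})"
    unfolding g_def by (rule bij_betw_disjoint_Un[OF f bij_betw_id]) auto
  moreover have "{..<n} \<union> {n..<n + m} = {..<n + m}" by auto
  ultimately have g: "bij_betw g {..<n + m} {..<n + m}" by simp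
  have "join_complete n E m i j \<longleftrightarrow> join_complete n E' m (g i) (g j)" if "i < n + m" "j < n + m" for i j
  proof -
    have f_lt: "k < n \<Longrightarrow> f k < n" for k using f by (auto simp: bij_betw_def)
    have "g i < n \<longleftrightarrow> i < n" "g j < n \<longleftrightarrow> j < n" "g i < n + m" "g j < n + m"
      using that f_lt[of i] f_lt[of j] by (auto simp: g_def)
    moreover have "g i = g j \<longleftrightarrow> i = j" using g that by (auto simp: bij_betw_def inj_on_def)
    ultimately show ?thesis using that adj by (auto simp: join_complete_def g_def)
  qed
  thus ?thesis using g unfolding graph_iso_def by blast
qed

lemma dominating_vertex_adjacent:
  assumes G: "is_graph h F" and v: "v < h" and deg: "degree h F v = h - 1" and w: "w < h" "w \<noteq> v"
  shows "F v w"
proof -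
  have sub: "{j. j < h \<and> F v j} \<subseteq> {..<h} - {v}" using G unfolding is_graph_def by auto
  moreover have "card {j. j < h \<and> F v j} = card ({..<h} - {v})" using deg v unfolding degree_def by simp
  ultimately have "{j. j < h \<and> F v j} = {..<h} - {v}" by (intro card_subset_eq) auto
  thus ?thesis using w by auto
qed

lemma join_of_dominating_set:
  assumes G: "is_graph (n + m) F" and S: "S \<subseteq> {..<n + m}" "card S = m"
    and dom: "\<And>v. v \<in> S \<Longrightarrow> degree (n + m) F v = n + m - 1"
  obtains X where "is_graph n X" and "graph_iso (n + m) F (n + m) (join_complete n X m)"
proof -
  define T where "T = {..<n + m} - S"
  have "card T = n" using S by (simp add: T_def card_Diff_subset finite_subset)
  then obtain g1 where g1: "bij_betw g1 {..<n} T" using finite_same_card_bij[of "{..<n}" T] by (auto simp: T_def)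
  obtain g2 where g2: "bij_betw g2 {n..<n + m} S"
    using finite_same_card_bij[of "{n..<n + m}" S] S by (auto intro: finite_subset)
  define g where "g i = (if i \<in> {..<n} then g1 i else g2 i)" for i
  have "bij_betw g ({..<n} \<union> {n..<n + m}) (T \<union> S)"
    unfolding g_def by (rule bij_betw_disjoint_Un[OF g1 g2]) (auto simp: T_def)
  moreover have "{..<n} \<union> {n..<n + m} = {..<n + m}" "T \<union> S = {..<n + m}" using S by (auto simp: T_def)
  ultimately have g: "bij_betw g {..<n + m} {..<n + m}" by simp
  have gS: "g i \<in> S" if "n \<le> i" "i < n + m" for i using that g2 by (auto simp: g_def bij_betw_def)
  define X where "X i j = (i < n \<and> j < n \<and> F (g i) (g j))" for i j
  have "join_complete n X m i j \<longleftrightarrow> F (g i) (g j)" if ij: "i < n + m" "j < n + m" for i j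
  proof (cases "i = j")
    case False
    hence g_ne: "g i \<noteq> g j" and g_lt: "g i < n + m" "g j < n + m"
      using g ij by (auto simp: bij_betw_def inj_on_def)
    have "F (g i) (g j)" if "\<not> (i < n \<and> j < n)"
    proof (cases "i < n")
      case True
      hence "F (g j) (g i)" using that ij dom[OF gS] g_ne g_lt by (auto intro!: dominating_vertex_adjacent[OF G])
      thus ?thesis using G unfolding is_graph_def by blast
    qed (use ij dom[OF gS] g_ne g_lt in \<open>auto intro!: dominating_vertex_adjacent[OF G]\<close>)
    thus ?thesis using ij False by (auto simp: join_complete_def X_def)
  qed (use G in \<open>auto simp: join_complete_def is_graph_def\<close>)
  hence "graph_iso (n + m) (join_complete n X m) (n + m) F" using g unfolding graph_iso_def by blast
  moreover have "is_graph n X" using G unfolding is_graph_def X_def by auto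
  ultimately show thesis using that graph_iso_sym by blast
qed

theorem lemma3p5:
  fixes \<alpha> :: real and n r m h :: nat and E F :: "nat \<Rightarrow> nat \<Rightarrow> bool"
  assumes "0 < \<alpha>" and "\<alpha> \<le> 1"
    and "is_graph n E" and "regular n E r" and "DAS \<alpha> n E"
    and "m \<ge> 1"
    and "is_graph h F"
    and "A_alpha_cospectral \<alpha> h F (n + m) (join_complete n E m)"
    and "card {v. v < h \<and> degree h F v = n + m - 1} \<ge> m"
  shows "graph_iso h F (n + m) (join_complete n E m)"
proof -
  note \<alpha> = assms(1) and E = assms(3) and R = assms(4) and DAS = assms(5) and m = assms(6)
    and F = assms(7) and cospectral = assms(8) and dominating = assms(9)
  have h: "h = n + m" using cospectral by (simp add: A_alpha_cospectral_def)
  obtain S where S: "S \<subseteq> {v. v < h \<and> degree h F v = n + m - 1}" and card_S: "card S = m"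
    using obtain_subset_with_card_n[OF dominating] by blast
  obtain X where X: "is_graph n X" and iso: "graph_iso h F (n + m) (join_complete n X m)"
    using join_of_dominating_set[of n m F S] F S card_S unfolding h by auto
  have "char_poly (A_alpha \<alpha> (n + m) (join_complete n X m)) = char_poly (A_alpha \<alpha> (n + m) (join_complete n E m))"
    using A_alpha_char_poly_graph_iso[OF iso] A_alpha_cospectral_char_poly[OF F join_is_graph[OF E] cospectral]
    by simp
  moreover from this have "regular n X r" by (rule join_char_poly_regular[OF \<alpha> X E R])
  ultimately have "char_poly (A_alpha \<alpha> n X) = char_poly (A_alpha \<alpha> n E)"
    using join_char_poly_cancel[OF X _ E R m] by blast
  hence "graph_iso n X n E"
    using DAS X by (simp add: DAS_def A_alpha_cospectral_def eig_mult_def)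
  thus ?thesis using graph_iso_trans[OF iso graph_iso_join] by blast
qed

end
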